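(* Let $\varepsilon>0$, let $n,m\ge 1$ and $\alpha\in(0,1)$. Consider a dataset of $n$ users in which user $i$ contributes $m$ samples $(s_{i,j},a^0_{i,j},a^1_{i,j},y_{i,j})$, $j\in[m]$, with known differential features $x_{i,j}=\phi(s_{i,j},a^1_{i,j})-\phi(s_{i,j},a^0_{i,j})\in\mathbb{R}^d$ and labels $y_{i,j}\in\{0,1\}$ drawn independently with $\mathbb{P}[y_{i,j}=1\mid x_{i,j}]=\sigma(x_{i,j}^\top\theta^* )$, where $\sigma(z)=1/(1+e^{-z})$. Suppose (Boundedness) $\theta^*\in\Theta_B=\{\theta\in\mathbb{R}^d:\langle \mathbf{1},\theta\rangle=0,\ \|\theta\|\le B\}$ and $\|\phi(s,a)\|\le L$ for all $(s,a)$. Apply user-level randomized response: independently for each $(i,j)$, $\tilde y_{i,j}=y_{i,j}$ with probability $\sigma(\varepsilon/m)=\frac{e^{\varepsilon/m}}{1+e^{\varepsilon/m}}$ and $\tilde y_{i,j}=1-y_{i,j}$ otherwise. Define $$\widehat l_{\mathcal D,\varepsilon}(\theta)=-\sum_{i=1}^n\sum_{j=1}^m\Big[\mathbb{1}(\tilde y_{i,j}=1)\log \widehat p^{\,1}_{i,j}+\mathbb{1}(\tilde y_{i,j}=0)\log\widehat p^{\,0}_{i,j}\Big],$$ $$\widehat p^{\,1}_{i,j}=\frac{\sigma(x_{i,j}^\top\theta)^{\sigma(\varepsilon/m)}}{(1-\sigma(x_{i,j}^\top\theta))^{1-\sigma(\varepsilon/m)}},\qquad \widehat p^{\,0}_{i,j}=\frac{(1-\sigma(x_{i,j}^\top\theta))^{\sigma(\varepsilon/m)}}{\sigma(x_{i,j}^\top\theta)^{1-\sigma(\varepsilon/m)}},$$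 and let $\widehat\theta_{\mathrm{RR}}\in\operatorname{argmin}_{\theta\in\Theta_B}\widehat l_{\mathcal D,\varepsilon}(\theta)$. Then $\widehat\theta_{\mathrm{RR}}$ is $\varepsilon$ user-level label differentially private, and with probability at least $1-\alpha$, $$\|\widehat\theta_{\mathrm{RR}}-\theta^*\|_2\le O\!\left(\frac{1}{\gamma\sqrt{\lambda_{\min}(\Sigma_{\mathcal D})}}\cdot\frac{e^{\varepsilon/m}+1}{e^{\varepsilon/m}-1}\sqrt{\frac{d+\log(1/\alpha)}{nm}}\right),$$ where $\gamma=\frac{1}{2+e^{-2LB}+e^{2LB}}$, $\Sigma_{\mathcal D}=\frac{1}{nm}\sum_{i=1}^n\sum_{j=1}^m x_{i,j}x_{i,j}^\top$, $\lambda_{\min}$ denotes the minimum eigenvalue, and $O(\cdot)$ hides a universal constant.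
   Context: A mechanism $\mathcal M$ on datasets of $n$ users each contributing $m$ samples is $(\varepsilon,\delta)$ user-level label differentially private if for any two datasets that differ only in the labels $y$ of the samples of a single user, and any event $O$, $\Pr[\mathcal M(\mathcal D)\in O]\le e^{\varepsilon}\Pr[\mathcal M(\mathcal D')\in O]+\delta$; the states and actions $(s,a^0,a^1)$ are considered public. $\varepsilon$ user-level label DP means $\delta=0$. $\phi:\mathcal S\times\mathcal A\to\mathbb{R}^d$ is a known fixed feature map (linear reward $r_\theta(s,a)=\phi(s,a)^\top\theta$, Bradley–Terry–Luce preference model). *)

theory Defs
  imports "HOL-Probability.Probability"
begin

definition sigmoid :: "real \<Rightarrow> real" where
  "sigmoid z = 1 / (1 + exp (- z))"

text \<open>Vectors of R^d are represented as functions nat => real vanishing at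
  indices >= d (so that the dimension d is an ordinary natural number and the
  universal constant can be quantified before d).\<close>
definition vecs :: "nat \<Rightarrow> (nat \<Rightarrow> real) set" where
  "vecs d = {v. \<forall>k\<ge>d. v k = 0}"

definition vinner :: "nat \<Rightarrow> (nat \<Rightarrow> real) \<Rightarrow> (nat \<Rightarrow> real) \<Rightarrow> real" where
  "vinner d u v = (\<Sum>k<d. u k * v k)"

definition vnorm :: "nat \<Rightarrow> (nat \<Rightarrow> real) \<Rightarrow> real" where
  "vnorm d v = sqrt (\<Sum>k<d. (v k)\<^sup>2)"

definition Theta_B :: "nat \<Rightarrow> real \<Rightarrow> (nat \<Rightarrow> real) set" where
  "Theta_B d B = {\<theta> \<in> vecs d. (\<Sum>k<d. \<theta> k) = 0 \<and> vnorm d \<theta> \<le> B}"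

definition feat ::
  "('s \<Rightarrow> 'a \<Rightarrow> (nat \<Rightarrow> real)) \<Rightarrow> (nat \<Rightarrow> nat \<Rightarrow> 's) \<Rightarrow> (nat \<Rightarrow> nat \<Rightarrow> 'a)
     \<Rightarrow> (nat \<Rightarrow> nat \<Rightarrow> 'a) \<Rightarrow> nat \<Rightarrow> nat \<Rightarrow> (nat \<Rightarrow> real)" where
  "feat \<phi> s a0 a1 i j = (\<lambda>k. \<phi> (s i j) (a1 i j) k - \<phi> (s i j) (a0 i j) k)"

text \<open>Index set of samples: user i < n, sample j < m. Labels are
  functions (nat * nat) => bool, True meaning label 1.\<close>
definition sample_idx :: "nat \<Rightarrow> nat \<Rightarrow> (nat \<times> nat) set" where
  "sample_idx n m = {..<n} \<times> {..<m}"

definition btl_labels ::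
  "nat \<Rightarrow> nat \<Rightarrow> nat \<Rightarrow> (nat \<Rightarrow> nat \<Rightarrow> (nat \<Rightarrow> real)) \<Rightarrow> (nat \<Rightarrow> real)
     \<Rightarrow> ((nat \<times> nat) \<Rightarrow> bool) pmf" where
  "btl_labels d n m x \<theta> =
     Pi_pmf (sample_idx n m) False
       (\<lambda>(i, j). bernoulli_pmf (sigmoid (vinner d (x i j) \<theta>)))"

definition rr_pmf ::
  "real \<Rightarrow> nat \<Rightarrow> nat \<Rightarrow> ((nat \<times> nat) \<Rightarrow> bool) \<Rightarrow> ((nat \<times> nat) \<Rightarrow> bool) pmf" where
  "rr_pmf \<epsilon> n m y =
     Pi_pmf (sample_idx n m) False
       (\<lambda>ij. map_pmf (\<lambda>keep. if keep then y ij else \<not> y ij)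
                 (bernoulli_pmf (sigmoid (\<epsilon> / real m))))"

definition rr_p1 :: "real \<Rightarrow> real \<Rightarrow> real" where
  "rr_p1 q z = sigmoid z powr q / (1 - sigmoid z) powr (1 - q)"

definition rr_p0 :: "real \<Rightarrow> real \<Rightarrow> real" where
  "rr_p0 q z = (1 - sigmoid z) powr q / sigmoid z powr (1 - q)"

definition rr_loss ::
  "nat \<Rightarrow> nat \<Rightarrow> nat \<Rightarrow> real \<Rightarrow> (nat \<Rightarrow> nat \<Rightarrow> (nat \<Rightarrow> real))
     \<Rightarrow> ((nat \<times> nat) \<Rightarrow> bool) \<Rightarrow> (nat \<Rightarrow> real) \<Rightarrow> real" where
  "rr_loss d n m \<epsilon> x yt \<theta> =
     - (\<Sum>i<n. \<Sum>j<m.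
          (if yt (i, j) then ln (rr_p1 (sigmoid (\<epsilon> / real m)) (vinner d (x i j) \<theta>))
           else ln (rr_p0 (sigmoid (\<epsilon> / real m)) (vinner d (x i j) \<theta>))))"

definition gram ::
  "nat \<Rightarrow> nat \<Rightarrow> (nat \<Rightarrow> nat \<Rightarrow> (nat \<Rightarrow> real)) \<Rightarrow> nat \<Rightarrow> nat \<Rightarrow> real" where
  "gram n m x k l = (1 / (real n * real m)) * (\<Sum>i<n. \<Sum>j<m. x i j k * x i j l)"

definition lambda_min :: "nat \<Rightarrow> (nat \<Rightarrow> nat \<Rightarrow> real) \<Rightarrow> real" where
  "lambda_min d M =
     Min {\<mu>. \<exists>v\<in>vecs d. v \<noteq> (\<lambda>_. 0) \<and> (\<forall>k<d. (\<Sum>l<d. M k l * v l) = \<mu> * v k)}"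

definition gamma_LB :: "real \<Rightarrow> real \<Rightarrow> real" where
  "gamma_LB L B = 1 / (2 + exp (- 2 * L * B) + exp (2 * L * B))"

definition user_label_dp ::
  "real \<Rightarrow> nat \<Rightarrow> nat \<Rightarrow> (((nat \<times> nat) \<Rightarrow> bool) \<Rightarrow> 'b pmf) \<Rightarrow> bool" where
  "user_label_dp \<epsilon> n m M \<longleftrightarrow>
     (\<forall>k<n. \<forall>y y'. (\<forall>i<n. \<forall>j<m. i \<noteq> k \<longrightarrow> y (i, j) = y' (i, j)) \<longrightarrow>
        (\<forall>E. measure_pmf.prob (M y) E \<le> exp \<epsilon> * measure_pmf.prob (M y') E))"

end

theory Submission
  imports Defs "Jordan_Normal_Form.Char_Poly"
begin

text \<open>
  Privacy: randomized response flips each label independently, and a single flip changes the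
  likelihood by a factor at most exp (\<epsilon> / m); a user owns m labels, and the estimator is a
  post-processing of the privatized labels.

  Utility: with q = sigmoid (\<epsilon> / m), the debiased loss is a sum of per-sample losses
  (2q - 1) log (1 + exp (-z)) - (y - q) z in the predictions z = x \<bullet> \<theta>. Its derivative at
  \<theta>* is centred, because q sigmoid z + (1 - q) (1 - sigmoid z) is exactly the probability that a
  privatized label equals 1, and on \<Theta>_B it is (2q - 1) \<gamma>-strongly convex in z. Comparing the
  losses at the minimiser and at \<theta>* gives (2q - 1) \<gamma> |\<delta>|^2 / 2 \<le> \<langle>w, \<delta>\<rangle> for the prediction
  differences \<delta> and the centred label noise w. Since \<delta> lies in the column span of the design
  (dimension at most d), \<langle>w, \<delta>\<rangle> \<le> |\<delta>| |P w| with P the orthogonal projection onto that span,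
  while |\<delta>|^2 \<ge> n m \<lambda>_min |\<theta> - \<theta>*|^2. Finally |P w|^2 = O(d + log (1/\<alpha>)) with probability
  1 - \<alpha>, by Markov's inequality for exp (|P w|^2 / 2); and 2q - 1 = (e^(\<epsilon>/m) - 1) / (e^(\<epsilon>/m) + 1).
\<close>

section \<open>Inner products of functions on a finite index set\<close>

definition inner_on :: "'i set \<Rightarrow> ('i \<Rightarrow> real) \<Rightarrow> ('i \<Rightarrow> real) \<Rightarrow> real" where
  "inner_on I u v = (\<Sum>i\<in>I. u i * v i)"

lemma inner_on_commute: "inner_on I u v = inner_on I v u"
  by (simp add: inner_on_def mult.commute)

lemma inner_on_self_nonneg: "0 \<le> inner_on I v v"
  by (simp add: inner_on_def sum_nonneg)

lemma inner_on_self_eq_0_iff: "finite I \<Longrightarrow> inner_on I v v = 0 \<longleftrightarrow> (\<forall>i\<in>I. v i = 0)"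
  unfolding inner_on_def by (subst sum_nonneg_eq_0_iff) auto

lemma inner_on_scaleL: "inner_on I (\<lambda>i. c * u i) v = c * inner_on I u v"
  by (simp add: inner_on_def sum_distrib_left mult.assoc)

lemma inner_on_scaleR: "inner_on I u (\<lambda>i. c * v i) = c * inner_on I u v"
  by (simp add: inner_on_def sum_distrib_left algebra_simps)

lemma inner_on_diff_right: "inner_on I u (\<lambda>i. v i - w i) = inner_on I u v - inner_on I u w"
  by (simp add: inner_on_def sum_subtractf algebra_simps)

lemma inner_on_sum_right:
  assumes "\<And>i. i \<in> I \<Longrightarrow> z i = (\<Sum>k\<in>K. c k * U k i)"
  shows "inner_on I w z = (\<Sum>k\<in>K. c k * inner_on I w (U k))"
proof -
  have "inner_on I w z = (\<Sum>i\<in>I. \<Sum>k\<in>K. w i * (c k * U k i))"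
    unfolding inner_on_def using assms by (auto intro!: sum.cong simp: sum_distrib_left)
  also have "\<dots> = (\<Sum>k\<in>K. \<Sum>i\<in>I. w i * (c k * U k i))" by (rule sum.swap)
  also have "\<dots> = (\<Sum>k\<in>K. c k * inner_on I w (U k))"
    unfolding inner_on_def by (auto intro!: sum.cong simp: sum_distrib_left algebra_simps)
  finally show ?thesis .
qed

lemma inner_on_le_L2_set:
  assumes "\<And>i. i \<in> I \<Longrightarrow> z i = (\<Sum>k\<in>K. c k * U k i)"
  shows "inner_on I w z \<le> L2_set c K * L2_set (\<lambda>k. inner_on I w (U k)) K"
proof -
  have "inner_on I w z = (\<Sum>k\<in>K. c k * inner_on I w (U k))" by (rule inner_on_sum_right[OF assms])
  also have "\<dots> \<le> (\<Sum>k\<in>K. \<bar>c k\<bar> * \<bar>inner_on I w (U k)\<bar>)"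
    by (intro sum_mono) (simp add: abs_mult[symmetric])
  also have "\<dots> \<le> L2_set c K * L2_set (\<lambda>k. inner_on I w (U k)) K" by (rule L2_set_mult_ineq)
  finally show ?thesis .
qed

lemma vinner_eq_inner_on: "vinner d = inner_on {..<d}"
  by (simp add: fun_eq_iff vinner_def inner_on_def)

lemma vinner_self_nonneg: "0 \<le> vinner d v v"
  by (simp add: vinner_eq_inner_on inner_on_self_nonneg)

lemma vinner_self_eq_0_iff: "vinner d v v = 0 \<longleftrightarrow> (\<forall>k<d. v k = 0)"
  by (auto simp: vinner_eq_inner_on inner_on_self_eq_0_iff)

lemma vinner_add_scaled:
  "vinner d (\<lambda>k. a k + t * b k) (\<lambda>k. a k + t * b k)
    = vinner d a a + 2 * t * vinner d b a + t\<^sup>2 * vinner d b b"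
  by (simp add: vinner_def sum.distrib sum_distrib_left power2_eq_square algebra_simps)

lemma vnorm_eq_sqrt_vinner: "vnorm d v = sqrt (vinner d v v)"
  by (simp add: vnorm_def vinner_def power2_eq_square)

lemma vnorm_nonneg: "0 \<le> vnorm d v"
  by (simp add: vnorm_def sum_nonneg)

lemma abs_vinner_le: "\<bar>vinner d u v\<bar> \<le> vnorm d u * vnorm d v"
proof -
  have "\<bar>vinner d u v\<bar> \<le> (\<Sum>k<d. \<bar>u k\<bar> * \<bar>v k\<bar>)"
    unfolding vinner_def by (rule order.trans[OF sum_abs]) (simp add: abs_mult)
  also have "\<dots> \<le> L2_set u {..<d} * L2_set v {..<d}" by (rule L2_set_mult_ineq)
  finally show ?thesis by (simp add: vnorm_def L2_set_def)
qed

lemma vnorm_diff_le: "vnorm d (\<lambda>k. u k - v k) \<le> vnorm d u + vnorm d v"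
proof -
  have "L2_set (\<lambda>k. u k + - v k) {..<d} \<le> L2_set u {..<d} + L2_set (\<lambda>k. - v k) {..<d}"
    by (rule L2_set_triangle_ineq)
  then show ?thesis by (simp add: vnorm_def L2_set_def)
qed

lemma vecs_nonzero_iff: "v \<in> vecs d \<Longrightarrow> v \<noteq> (\<lambda>_. 0) \<longleftrightarrow> (\<exists>k<d. v k \<noteq> 0)"
  by (auto simp: vecs_def fun_eq_iff) (meson not_le)

section \<open>The minimal eigenvalue of a symmetric matrix\<close>

definition quad_form :: "nat \<Rightarrow> (nat \<Rightarrow> nat \<Rightarrow> real) \<Rightarrow> (nat \<Rightarrow> real) \<Rightarrow> real" where
  "quad_form d M v = (\<Sum>k<d. \<Sum>l<d. M k l * v k * v l)"

lemma quad_form_scale: "quad_form d M (\<lambda>k. c * v k) = c\<^sup>2 * quad_form d M v"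
  by (simp add: quad_form_def sum_distrib_left power2_eq_square algebra_simps)

lemma quad_form_add_scaled:
  assumes sym: "\<And>k l. k < d \<Longrightarrow> l < d \<Longrightarrow> M k l = M l k"
  shows "quad_form d M (\<lambda>k. a k + t * b k)
    = quad_form d M a + 2 * t * (\<Sum>k<d. b k * (\<Sum>l<d. M k l * a l)) + t\<^sup>2 * quad_form d M b"
proof -
  have "(\<Sum>k<d. \<Sum>l<d. M k l * a k * b l) = (\<Sum>l<d. \<Sum>k<d. M l k * a k * b l)"
    by (subst sum.swap) (auto intro!: sum.cong simp: sym)
  then have cross: "(\<Sum>k<d. \<Sum>l<d. M k l * a k * b l) = (\<Sum>k<d. b k * (\<Sum>l<d. M k l * a l))"
    by (simp add: sum_distrib_left algebra_simps)
  have "quad_form d M (\<lambda>k. a k + t * b k) = quad_form d M a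
      + t * (\<Sum>k<d. \<Sum>l<d. M k l * a k * b l) + t * (\<Sum>k<d. \<Sum>l<d. M k l * b k * a l)
      + t\<^sup>2 * quad_form d M b"
    by (simp add: quad_form_def sum.distrib sum_distrib_left power2_eq_square algebra_simps)
  also have "(\<Sum>k<d. \<Sum>l<d. M k l * b k * a l) = (\<Sum>k<d. b k * (\<Sum>l<d. M k l * a l))"
    by (simp add: sum_distrib_left mult_ac)
  finally show ?thesis
    unfolding cross by (simp add: algebra_simps)
qed

lemma continuous_on_vinner_self [continuous_intros]:
  "continuous_on S (\<lambda>v::nat \<Rightarrow> real. vinner d v v)"
  unfolding vinner_def
  by (intro continuous_intros continuous_on_subset[OF continuous_on_product_coordinates]) auto

lemma continuous_on_quad_form [continuous_intros]:
  "continuous_on S (\<lambda>v::nat \<Rightarrow> real. quad_form d M v)"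
  unfolding quad_form_def
  by (intro continuous_intros continuous_on_subset[OF continuous_on_product_coordinates]) auto

lemma compact_unit_sphere_vecs: "compact {v. v \<in> vecs d \<and> vinner d v v = 1}"
proof -
  define box where "box = PiE UNIV (\<lambda>k::nat. if k < d then {-1..1::real} else {0})"
  have "compactin (product_topology (\<lambda>_. euclidean) UNIV) box"
    unfolding box_def by (subst compactin_PiE) auto
  then have "compact box" by (simp add: euclidean_product_topology)
  moreover have "closed {v::nat \<Rightarrow> real. vinner d v v = 1}"
    by (intro closed_Collect_eq continuous_intros)
  moreover have "{v. v \<in> vecs d \<and> vinner d v v = 1} = box \<inter> {v. vinner d v v = 1}"
  proof -
    have "\<bar>v k\<bar> \<le> 1" if "vinner d v v = 1" "k < d" for v k
    proof -
      have "(v k)\<^sup>2 \<le> vinner d v v"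
        using that(2) member_le_sum[of k "{..<d}" "\<lambda>j. v j * v j"]
        by (simp add: vinner_def power2_eq_square)
      then show ?thesis using that(1) by (simp add: abs_square_le_1)
    qed
    then show ?thesis
      by (auto simp: box_def vecs_def PiE_iff abs_le_iff split: if_splits)
  qed
  ultimately show ?thesis by (simp add: compact_Int_closed)
qed

lemma quad_form_min_on_unit_sphere:
  assumes "d > 0"
  obtains v0 where "v0 \<in> vecs d" "vinner d v0 v0 = 1"
    "\<And>v. v \<in> vecs d \<Longrightarrow> quad_form d M v0 * vinner d v v \<le> quad_form d M v"
proof -
  let ?S = "{v. v \<in> vecs d \<and> vinner d v v = 1}"
  have "(\<lambda>k. if k = 0 then 1 else 0) \<in> ?S"
    using assms by (simp add: vecs_def vinner_def if_distrib cong: if_cong)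
  then obtain v0 where v0: "v0 \<in> ?S" and min: "\<And>u. u \<in> ?S \<Longrightarrow> quad_form d M v0 \<le> quad_form d M u"
    using continuous_attains_inf[OF compact_unit_sphere_vecs, where f="quad_form d M"]
    by (auto intro: continuous_intros)
  have "quad_form d M v0 * vinner d v v \<le> quad_form d M v" if v: "v \<in> vecs d" for v
  proof (cases "vinner d v v = 0")
    case True
    then have "\<forall>k<d. v k = 0" by (simp add: vinner_self_eq_0_iff)
    then show ?thesis using True by (simp add: quad_form_def)
  next
    case False
    define s where "s = sqrt (vinner d v v)"
    have s: "s > 0" "s\<^sup>2 = vinner d v v"
      using False vinner_self_nonneg[of d v] by (simp_all add: s_def)
    have "vinner d (\<lambda>k. (1 / s) * v k) (\<lambda>k. (1 / s) * v k) = (1 / s) * ((1 / s) * vinner d v v)"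
      by (simp only: vinner_eq_inner_on inner_on_scaleL inner_on_scaleR)
    then have "(\<lambda>k. (1 / s) * v k) \<in> ?S"
      using v s False by (simp add: vecs_def power2_eq_square)
    then have "quad_form d M v0 \<le> quad_form d M (\<lambda>k. (1 / s) * v k)" by (rule min)
    also have "\<dots> = quad_form d M v / s\<^sup>2" by (simp only: quad_form_scale) (simp add: power_divide)
    finally have "quad_form d M v0 \<le> quad_form d M v / s\<^sup>2" .
    moreover have "0 < s\<^sup>2" using s(1) by simp
    ultimately show ?thesis using s(2) by (simp add: pos_le_divide_eq)
  qed
  then show ?thesis using v0 that by blast
qed

lemma linear_coeff_eq_0_if_nonneg:
  fixes b c :: real
  assumes "\<And>t. 0 \<le> b * t + c * t\<^sup>2"
  shows "b = 0"
proof (rule ccontr)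
  assume "b \<noteq> 0"
  define s where "s = 1 / (\<bar>c\<bar> + 1)"
  have "c * s < 1" by (simp add: s_def divide_less_eq abs_if)
  then have "b\<^sup>2 * s * (c * s - 1) < 0"
    using \<open>b \<noteq> 0\<close> by (intro mult_pos_neg) (auto simp: s_def)
  moreover have "b * (- b * s) + c * (- b * s)\<^sup>2 = b\<^sup>2 * s * (c * s - 1)"
    by (simp add: power2_eq_square algebra_simps)
  ultimately show False using assms[of "- b * s"] by linarith
qed

text \<open>For the residual r = M v0 - Q(v0) v0, the quadratic t \<mapsto> Q(v0 + t r) - Q(v0) |v0 + t r|^2
  is nonnegative and vanishes at 0, so its linear coefficient 2 |r|^2 vanishes.\<close>
lemma rayleigh_minimiser_eigenvector:
  assumes sym: "\<And>k l. k < d \<Longrightarrow> l < d \<Longrightarrow> M k l = M l k"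
    and v0: "v0 \<in> vecs d" "vinner d v0 v0 = 1"
    and min: "\<And>v. v \<in> vecs d \<Longrightarrow> quad_form d M v0 * vinner d v v \<le> quad_form d M v"
  shows "\<forall>k<d. (\<Sum>l<d. M k l * v0 l) = quad_form d M v0 * v0 k"
proof -
  define \<mu> where "\<mu> = quad_form d M v0"
  define r where "r = (\<lambda>k. if k < d then (\<Sum>l<d. M k l * v0 l) - \<mu> * v0 k else 0)"
  have "(\<Sum>k<d. r k * (\<Sum>l<d. M k l * v0 l)) = (\<Sum>k<d. r k * (r k + \<mu> * v0 k))"
    by (intro sum.cong) (auto simp: r_def)
  then have Mv0: "(\<Sum>k<d. r k * (\<Sum>l<d. M k l * v0 l)) = vinner d r r + \<mu> * vinner d r v0"
    by (simp add: vinner_def sum.distrib sum_distrib_left algebra_simps)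
  have "0 \<le> (2 * vinner d r r) * t + (quad_form d M r - \<mu> * vinner d r r) * t\<^sup>2" for t
  proof -
    have "(\<lambda>k. v0 k + t * r k) \<in> vecs d" using v0(1) by (simp add: vecs_def r_def)
    from min[OF this] have "\<mu> * (1 + 2 * t * vinner d r v0 + t\<^sup>2 * vinner d r r)
        \<le> \<mu> + 2 * t * (vinner d r r + \<mu> * vinner d r v0) + t\<^sup>2 * quad_form d M r"
      by (simp only: quad_form_add_scaled[OF sym] vinner_add_scaled Mv0 v0(2) \<mu>_def[symmetric])
    then show ?thesis by (simp add: algebra_simps)
  qed
  then have "vinner d r r = 0" using linear_coeff_eq_0_if_nonneg by fastforce
  then show ?thesis by (auto simp: vinner_self_eq_0_iff r_def \<mu>_def)
qed

lemma finite_eigenvalues: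
  "finite {\<mu>. \<exists>v\<in>vecs d. v \<noteq> (\<lambda>_. 0) \<and> (\<forall>k<d. (\<Sum>l<d. M k l * v l) = \<mu> * v k)}"
proof -
  define A :: "real mat" where "A = mat d d (\<lambda>(k, l). M k l)"
  have A: "A \<in> carrier_mat d d" by (simp add: A_def)
  have "char_poly A \<noteq> 0"
    using degree_monic_char_poly[OF A] by auto
  then have roots: "finite {\<mu>. poly (char_poly A) \<mu> = 0}" by (rule poly_roots_finite)
  have eig: "eigenvalue A \<mu>"
    if "v \<in> vecs d" "v \<noteq> (\<lambda>_. 0)" "\<forall>k<d. (\<Sum>l<d. M k l * v l) = \<mu> * v k" for \<mu> v
  proof -
    have "vec d v \<noteq> 0\<^sub>v d" using that(1,2) by (auto simp: vecs_nonzero_iff vec_eq_iff)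
    moreover have "A *\<^sub>v vec d v = \<mu> \<cdot>\<^sub>v vec d v"
      using that(3) by (auto simp: A_def mult_mat_vec_def scalar_prod_def row_def lessThan_atLeast0
          intro!: eq_vecI)
    ultimately show ?thesis
      unfolding eigenvalue_def eigenvector_def using A by (intro exI[of _ "vec d v"]) auto
  qed
  show ?thesis
    by (rule rev_finite_subset[OF roots]) (auto simp: eigenvalue_root_char_poly[OF A] dest: eig)
qed

lemma lambda_min_le_quad_form:
  assumes sym: "\<And>k l. k < d \<Longrightarrow> l < d \<Longrightarrow> M k l = M l k" and v: "v \<in> vecs d"
  shows "lambda_min d M * vinner d v v \<le> quad_form d M v"
proof (cases "d = 0")
  case True
  then show ?thesis by (simp add: vinner_def quad_form_def)
next
  case False
  then obtain v0 where v0: "v0 \<in> vecs d" "vinner d v0 v0 = 1"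
    and min: "\<And>v. v \<in> vecs d \<Longrightarrow> quad_form d M v0 * vinner d v v \<le> quad_form d M v"
    using quad_form_min_on_unit_sphere[of d M] by auto
  have "v0 \<noteq> (\<lambda>_. 0)" using v0(2) by (auto simp: vinner_def)
  then have "lambda_min d M \<le> quad_form d M v0"
    unfolding lambda_min_def
    using v0(1) rayleigh_minimiser_eigenvector[OF sym v0 min]
    by (intro Min_le finite_eigenvalues) auto
  then have "lambda_min d M * vinner d v v \<le> quad_form d M v0 * vinner d v v"
    by (simp add: mult_right_mono vinner_self_nonneg)
  also have "\<dots> \<le> quad_form d M v" using min[OF v] .
  finally show ?thesis .
qed

section \<open>The debiased loss and its strong convexity\<close>

lemma one_plus_exp_pos: "0 < 1 + exp (x::real)"
  by (simp add: add_pos_pos)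

lemma one_plus_exp_neq_0: "1 + exp (x::real) \<noteq> 0"
  using one_plus_exp_pos[of x] by linarith

lemma sigmoid_pos: "0 < sigmoid z"
  by (simp add: sigmoid_def add_pos_pos)

lemma sigmoid_less_1: "sigmoid z < 1"
  by (simp add: sigmoid_def add_pos_pos divide_less_eq)

lemma one_minus_sigmoid: "1 - sigmoid z = exp (- z) / (1 + exp (- z))"
  by (simp add: sigmoid_def one_plus_exp_neq_0 field_simps)

lemma sigmoid_conv_exp: "sigmoid z = exp z / (exp z + 1)"
proof -
  have "exp z * (1 + exp (- z)) = exp z + 1" by (simp add: distrib_left exp_minus_inverse)
  then show ?thesis
    unfolding sigmoid_def by (metis exp_not_eq_zero nonzero_mult_divide_mult_cancel_left mult_1_right)
qed

lemma sigmoid_gt_half: "0 < t \<Longrightarrow> 1 / 2 < sigmoid t"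
proof -
  have "0 < exp t + 1" by (simp add: add_pos_pos)
  then show "0 < t \<Longrightarrow> 1 / 2 < sigmoid t" by (simp add: sigmoid_conv_exp field_simps)
qed

lemma two_sigmoid_minus_1: "2 * sigmoid t - 1 = (exp t - 1) / (exp t + 1)"
proof -
  have "0 < exp t + 1" by (simp add: add_pos_pos)
  then show ?thesis by (simp add: sigmoid_conv_exp field_simps)
qed

definition logistic_loss :: "real \<Rightarrow> real" where
  "logistic_loss z = ln (1 + exp (- z))"

definition rr_nll :: "real \<Rightarrow> bool \<Rightarrow> real \<Rightarrow> real" where
  "rr_nll q b z = (2 * q - 1) * logistic_loss z - (of_bool b - q) * z"

text \<open>The probability that a label with success probability sigmoid z is still True after
  randomized response with keep probability q.\<close>
definition rr_mean :: "real \<Rightarrow> real \<Rightarrow> real" where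
  "rr_mean q z = q * sigmoid z + (1 - q) * (1 - sigmoid z)"

lemma rr_mean_bounds: "0 \<le> q \<Longrightarrow> q \<le> 1 \<Longrightarrow> 0 \<le> rr_mean q z \<and> rr_mean q z \<le> 1"
  using sigmoid_pos[of z] sigmoid_less_1[of z]
  by (auto simp: rr_mean_def intro!: convex_bound_le add_nonneg_nonneg mult_nonneg_nonneg)

lemma ln_sigmoid: "ln (sigmoid z) = - logistic_loss z"
  by (simp add: sigmoid_def logistic_loss_def ln_div add_pos_pos)

lemma ln_one_minus_sigmoid: "ln (1 - sigmoid z) = - z - logistic_loss z"
  using one_plus_exp_pos[of "- z"] by (simp add: one_minus_sigmoid logistic_loss_def ln_div)

lemma ln_rr_p1: "ln (rr_p1 q z) = - rr_nll q True z"
  using sigmoid_pos[of z] sigmoid_less_1[of z]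
  by (simp add: rr_p1_def rr_nll_def ln_div ln_powr ln_sigmoid ln_one_minus_sigmoid algebra_simps)

lemma ln_rr_p0: "ln (rr_p0 q z) = - rr_nll q False z"
  using sigmoid_pos[of z] sigmoid_less_1[of z]
  by (simp add: rr_p0_def rr_nll_def ln_div ln_powr ln_sigmoid ln_one_minus_sigmoid algebra_simps)

lemma rr_loss_eq_sum_rr_nll:
  "rr_loss d n m \<epsilon> x yt \<theta>
    = (\<Sum>p\<in>sample_idx n m. rr_nll (sigmoid (\<epsilon> / real m)) (yt p) (vinner d (x (fst p) (snd p)) \<theta>))"
proof -
  have "- (if b then ln (rr_p1 q z) else ln (rr_p0 q z)) = rr_nll q b z" for q b z
    by (simp add: ln_rr_p1 ln_rr_p0)
  then show ?thesis
    by (simp add: rr_loss_def sample_idx_def sum.cartesian_product sum_negf[symmetric] case_prod_beta)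
qed

lemma logistic_loss_has_derivative: "(logistic_loss has_real_derivative (sigmoid z - 1)) (at z)"
proof -
  have "(logistic_loss has_real_derivative (1 / (1 + exp (- z)) * (- exp (- z)))) (at z)"
    unfolding logistic_loss_def[abs_def] by (auto intro!: derivative_eq_intros simp: add_pos_pos)
  moreover have "1 / (1 + exp (- z)) * (- exp (- z)) = sigmoid z - 1"
    using one_minus_sigmoid[of z] by (simp add: algebra_simps)
  ultimately show ?thesis by simp
qed

lemma sigmoid_has_derivative: "(sigmoid has_real_derivative (1 / (2 + 2 * cosh z))) (at z)"
proof -
  have "(sigmoid has_real_derivative (exp (- z) / (1 + exp (- z))\<^sup>2)) (at z)"
    unfolding sigmoid_def[abs_def]
    by (auto intro!: derivative_eq_intros simp: one_plus_exp_neq_0 power2_eq_square field_simps)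
  moreover have "exp (- z) / (1 + exp (- z))\<^sup>2 = 1 / (2 + 2 * cosh z)"
  proof -
    have "(1 / e) / (1 + 1 / e)\<^sup>2 = 1 / (2 + (e + 1 / e))" if "e > 0" for e :: real
      using that by (simp add: field_simps power2_eq_square)
    from this[of "exp z"] show ?thesis by (simp add: cosh_field_def exp_minus inverse_eq_divide)
  qed
  ultimately show ?thesis by simp
qed

text \<open>On [-R, R] the curvature sigmoid' = 1 / (2 + 2 cosh z) of the logistic loss is at least
  1 / (2 + 2 cosh R).\<close>
lemma logistic_loss_strongly_convex:
  assumes "\<bar>a\<bar> \<le> R" "\<bar>b\<bar> \<le> R"
  shows "(sigmoid a - 1) * (b - a) + 1 / (2 + 2 * cosh R) / 2 * (b - a)\<^sup>2
    \<le> logistic_loss b - logistic_loss a"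
proof -
  define g where "g = 1 / (2 + 2 * cosh R)"
  have "(sigmoid a - 1 - g * a) * (b - a)
      \<le> (logistic_loss b - g / 2 * b\<^sup>2) - (logistic_loss a - g / 2 * a\<^sup>2)"
  proof (rule f''_imp_f'[where C = "{-R..R}" and f = "\<lambda>z. logistic_loss z - g / 2 * z\<^sup>2"
        and f' = "\<lambda>z. sigmoid z - 1 - g * z" and f'' = "\<lambda>z. 1 / (2 + 2 * cosh z) - g"])
    show "0 \<le> 1 / (2 + 2 * cosh z) - g" if "z \<in> {-R..R}" for z
    proof -
      have "cosh z \<le> cosh R"
        using that cosh_real_nonneg_le_iff[of "\<bar>z\<bar>" "\<bar>R\<bar>"] by auto
      then show ?thesis
        by (simp add: g_def frac_le add_pos_nonneg)
    qed
  qed (use assms in \<open>auto intro!: derivative_eq_intros logistic_loss_has_derivative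
      sigmoid_has_derivative\<close>)
  then show ?thesis
    unfolding g_def[symmetric] by (simp add: power2_eq_square algebra_simps)
qed

lemma rr_nll_strongly_convex:
  assumes "\<bar>a\<bar> \<le> R" "\<bar>b\<bar> \<le> R" "1 / 2 \<le> q"
  shows "(rr_mean q a - of_bool y) * (b - a) + (2 * q - 1) * (1 / (2 + 2 * cosh R) / 2) * (b - a)\<^sup>2
    \<le> rr_nll q y b - rr_nll q y a"
proof -
  have "(2 * q - 1) * ((sigmoid a - 1) * (b - a) + 1 / (2 + 2 * cosh R) / 2 * (b - a)\<^sup>2)
      \<le> (2 * q - 1) * (logistic_loss b - logistic_loss a)"
    using logistic_loss_strongly_convex[OF assms(1,2)] assms(3) by (intro mult_left_mono) auto
  then show ?thesis by (simp add: rr_nll_def rr_mean_def algebra_simps)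
qed

section \<open>Orthonormal expansions\<close>

definition orthonormal :: "'i set \<Rightarrow> nat \<Rightarrow> (nat \<Rightarrow> 'i \<Rightarrow> real) \<Rightarrow> bool" where
  "orthonormal I r U \<longleftrightarrow> (\<forall>k<r. \<forall>l<r. inner_on I (U k) (U l) = (if k = l then 1 else 0))"

definition in_orthonormal_span :: "'i set \<Rightarrow> nat \<Rightarrow> (nat \<Rightarrow> 'i \<Rightarrow> real) \<Rightarrow> ('i \<Rightarrow> real) \<Rightarrow> bool" where
  "in_orthonormal_span I r U a \<longleftrightarrow> (\<forall>i\<in>I. a i = (\<Sum>k<r. inner_on I (U k) a * U k i))"

lemma inner_on_orthonormal_expansion:
  assumes "orthonormal I r U" "l < r" "\<And>i. i \<in> I \<Longrightarrow> z i = (\<Sum>k<r. c k * U k i)"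
  shows "inner_on I (U l) z = c l"
proof -
  have "inner_on I (U l) z = (\<Sum>k<r. c k * inner_on I (U l) (U k))"
    by (rule inner_on_sum_right[OF assms(3)])
  also have "\<dots> = (\<Sum>k<r. if k = l then c l else 0)"
    using assms(1,2) unfolding orthonormal_def by (intro sum.cong) auto
  also have "\<dots> = c l" using assms(2) by simp
  finally show ?thesis .
qed

lemma sum_square_orthonormal_expansion:
  assumes "orthonormal I r U"
  shows "(\<Sum>i\<in>I. (\<Sum>k<r. c k * U k i)\<^sup>2) = (\<Sum>k<r. (c k)\<^sup>2)"
proof -
  define z where "z = (\<lambda>i. \<Sum>k<r. c k * U k i)"
  have "inner_on I z z = (\<Sum>k<r. c k * inner_on I (U k) z)"
    by (subst inner_on_commute) (rule inner_on_sum_right, simp add: z_def)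
  also have "\<dots> = (\<Sum>k<r. c k * c k)"
    using inner_on_orthonormal_expansion[OF assms, of _ z c] by (simp add: z_def)
  finally show ?thesis by (simp add: inner_on_def z_def power2_eq_square)
qed

lemma orthonormal_abs_le_1:
  assumes "orthonormal I r U" "k < r" "i \<in> I" "finite I"
  shows "\<bar>U k i\<bar> \<le> 1"
proof -
  have "(U k i)\<^sup>2 \<le> inner_on I (U k) (U k)"
    using member_le_sum[of i I "\<lambda>j. U k j * U k j"] assms(3,4)
    by (simp add: inner_on_def power2_eq_square)
  also have "\<dots> = 1" using assms(1,2) by (simp add: orthonormal_def)
  finally show ?thesis by (simp add: abs_square_le_1)
qed

lemma abs_inner_on_orthonormal_le_card:
  assumes "orthonormal I r U" "k < r" "finite I" "\<And>i. i \<in> I \<Longrightarrow> \<bar>w i\<bar> \<le> 1"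
  shows "\<bar>inner_on I (U k) w\<bar> \<le> card I"
proof -
  have "\<bar>inner_on I (U k) w\<bar> \<le> (\<Sum>i\<in>I. \<bar>U k i\<bar> * \<bar>w i\<bar>)"
    unfolding inner_on_def by (rule order.trans[OF sum_abs]) (simp add: abs_mult)
  also have "\<dots> \<le> (\<Sum>i\<in>I. 1)"
    using orthonormal_abs_le_1[OF assms(1,2) _ assms(3)] assms(4)
    by (intro sum_mono mult_le_one) auto
  finally show ?thesis by simp
qed

lemma orthonormal_extend:
  assumes "orthonormal I r U" "\<And>l. l < r \<Longrightarrow> inner_on I (U l) e = 0" "inner_on I e e = 1"
  shows "orthonormal I (Suc r) (U(r := e))"
  using assms by (auto simp: orthonormal_def less_Suc_eq inner_on_commute)

lemma in_orthonormal_span_extend: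
  assumes "in_orthonormal_span I r U a" "\<And>l. l < r \<Longrightarrow> inner_on I (U l) e = 0"
  shows "in_orthonormal_span I (Suc r) (U(r := e)) a"
proof -
  have "inner_on I e a = (\<Sum>k<r. inner_on I (U k) a * inner_on I e (U k))"
    using assms(1) unfolding in_orthonormal_span_def by (intro inner_on_sum_right) auto
  also have "\<dots> = 0" using assms(2) by (simp add: inner_on_commute)
  finally show ?thesis using assms(1) by (simp add: in_orthonormal_span_def)
qed

lemma in_orthonormal_span_lincomb:
  assumes "\<And>j. j \<in> J \<Longrightarrow> in_orthonormal_span I r U (a j)"
    and "\<And>i. i \<in> I \<Longrightarrow> z i = (\<Sum>j\<in>J. c j * a j i)"
  shows "in_orthonormal_span I r U z"
  unfolding in_orthonormal_span_def
proof
  fix i assume i: "i \<in> I"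
  have "z i = (\<Sum>j\<in>J. c j * (\<Sum>k<r. inner_on I (U k) (a j) * U k i))"
    using assms i by (simp add: in_orthonormal_span_def)
  also have "\<dots> = (\<Sum>k<r. (\<Sum>j\<in>J. c j * inner_on I (U k) (a j)) * U k i)"
    by (simp add: sum_distrib_left sum_distrib_right mult.assoc) (rule sum.swap)
  also have "\<dots> = (\<Sum>k<r. inner_on I (U k) z * U k i)"
  proof -
    have "inner_on I (U k) z = (\<Sum>j\<in>J. c j * inner_on I (U k) (a j))" for k
      using assms(2) by (rule inner_on_sum_right)
    then show ?thesis by simp
  qed
  finally show "z i = (\<Sum>k<r. inner_on I (U k) z * U k i)" .
qed

lemma orthonormal_span_insert:
  assumes "finite I" "orthonormal I r U"
  obtains U' r' where "r' \<le> Suc r" "orthonormal I r' U'" "in_orthonormal_span I r' U' a"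
    "\<And>b. in_orthonormal_span I r U b \<Longrightarrow> in_orthonormal_span I r' U' b"
proof -
  define proj where "proj = (\<lambda>i. \<Sum>k<r. inner_on I (U k) a * U k i)"
  define res where "res = (\<lambda>i. a i - proj i)"
  have res_orth: "inner_on I (U l) res = 0" if "l < r" for l
    using inner_on_orthonormal_expansion[OF assms(2) that, where c = "\<lambda>k. inner_on I (U k) a"]
    by (simp add: res_def proj_def inner_on_diff_right)
  show thesis
  proof (cases "inner_on I res res = 0")
    case True
    then have "in_orthonormal_span I r U a"
      using assms(1) by (simp add: inner_on_self_eq_0_iff res_def proj_def in_orthonormal_span_def)
    then show thesis using that[of r U] assms(2) by simp
  next
    case False
    define e where "e = (\<lambda>i. (1 / sqrt (inner_on I res res)) * res i)"
    have pos: "0 < inner_on I res res" using False inner_on_self_nonneg[of I res] by simp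
    have e_orth: "inner_on I (U l) e = 0" if "l < r" for l
      using res_orth[OF that] unfolding e_def inner_on_scaleR by simp
    have "inner_on I e e = 1"
      using pos unfolding e_def inner_on_scaleL inner_on_scaleR by simp
    then have U': "orthonormal I (Suc r) (U(r := e))"
      using orthonormal_extend[OF assms(2)] e_orth by blast
    have "inner_on I res proj = (\<Sum>k<r. inner_on I (U k) a * inner_on I res (U k))"
      by (rule inner_on_sum_right) (simp add: proj_def)
    also have "\<dots> = 0" using res_orth by (simp add: inner_on_commute)
    finally have "inner_on I res res = inner_on I res a"
      by (subst (2) res_def) (simp add: inner_on_diff_right)
    then have "inner_on I e a * e i = res i" for i
      using pos unfolding e_def inner_on_scaleL by (simp add: real_div_sqrt)
    then have "in_orthonormal_span I (Suc r) (U(r := e)) a"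
      by (simp add: in_orthonormal_span_def res_def proj_def)
    then show thesis
      using that[of "Suc r" "U(r := e)"] U' e_orth in_orthonormal_span_extend by blast
  qed
qed

lemma gram_schmidt_on:
  assumes "finite I"
  shows "\<exists>U r. r \<le> p \<and> orthonormal I r U \<and> (\<forall>j<p. in_orthonormal_span I r U (a j))"
proof (induction p)
  case 0
  show ?case by (auto simp: orthonormal_def)
next
  case (Suc p)
  then obtain U r where "r \<le> p" "orthonormal I r U" "\<forall>j<p. in_orthonormal_span I r U (a j)"
    by blast
  with orthonormal_span_insert[OF assms, of r U "a p"] show ?case
    by (metis Suc_le_mono le_trans less_Suc_eq)
qed

lemma inner_on_le_projection_norm:
  assumes "orthonormal I r U" "in_orthonormal_span I r U z"
  shows "inner_on I w z \<le> sqrt (inner_on I z z) * sqrt (\<Sum>k<r. (inner_on I (U k) w)\<^sup>2)"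
proof -
  define c where "c = (\<lambda>k. inner_on I (U k) z)"
  have z: "z i = (\<Sum>k<r. c k * U k i)" if "i \<in> I" for i
    using assms(2) that by (simp add: in_orthonormal_span_def c_def)
  have "inner_on I z z = (\<Sum>i\<in>I. (\<Sum>k<r. c k * U k i)\<^sup>2)"
    unfolding inner_on_def by (intro sum.cong) (auto simp: z power2_eq_square)
  then have "inner_on I z z = (\<Sum>k<r. (c k)\<^sup>2)"
    by (simp add: sum_square_orthonormal_expansion[OF assms(1)])
  then show ?thesis
    using inner_on_le_L2_set[where K = "{..<r}" and w = w, OF z]
    by (simp add: L2_set_def inner_on_commute)
qed

section \<open>Concentration of projected Bernoulli noise\<close>

lemma hoeffding_two_point:
  fixes h p :: real
  assumes "0 \<le> h" "0 \<le> p" "p \<le> 1"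
  shows "exp (h * (1 - p)) * p + exp (- h * p) * (1 - p) \<le> exp (h\<^sup>2 / 8)"
proof -
  have pos: "0 < 1 + p * (exp h - 1)"
    using assms by (intro add_pos_nonneg mult_nonneg_nonneg) auto
  have "exp (h * (1 - p)) * p + exp (- h * p) * (1 - p) = exp (- h * p + ln (1 + p * (exp h - 1)))"
    using pos by (simp add: exp_add exp_diff exp_minus field_simps)
  also have "\<dots> \<le> exp (h\<^sup>2 / 8)"
    using Hoeffdings_lemma_aux[of h p] assms by simp
  finally show ?thesis .
qed

lemma bernoulli_centered_mgf_le:
  assumes "0 \<le> p" "p \<le> 1"
  shows "measure_pmf.expectation (bernoulli_pmf p) (\<lambda>b. exp (h * (of_bool b - p))) \<le> exp (h\<^sup>2 / 8)"
proof (cases "0 \<le> h")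
  case True
  then show ?thesis using hoeffding_two_point[OF True assms] assms by simp
next
  case False
  then show ?thesis
    using hoeffding_two_point[of "- h" "1 - p"] assms by (simp add: algebra_simps)
qed

lemma finite_set_pmf_Pi_pmf_bool:
  "finite I \<Longrightarrow> finite (set_pmf (Pi_pmf I False (q :: 'i \<Rightarrow> bool pmf)))"
  by (rule finite_subset[OF set_Pi_pmf_subset']) (auto intro: finite_PiE_dflt)

lemma Pi_pmf_bernoulli_mgf_le:
  assumes fin: "finite I" and p: "\<And>i. i \<in> I \<Longrightarrow> 0 \<le> p i \<and> p i \<le> 1"
  shows "measure_pmf.expectation (Pi_pmf I False (\<lambda>i. bernoulli_pmf (p i)))
           (\<lambda>Y. exp (\<Sum>i\<in>I. v i * (of_bool (Y i) - p i))) \<le> exp ((\<Sum>i\<in>I. (v i)\<^sup>2) / 8)"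
proof -
  have "measure_pmf.expectation (Pi_pmf I False (\<lambda>i. bernoulli_pmf (p i)))
           (\<lambda>Y. exp (\<Sum>i\<in>I. v i * (of_bool (Y i) - p i)))
      = measure_pmf.expectation (Pi_pmf I False (\<lambda>i. bernoulli_pmf (p i)))
           (\<lambda>Y. \<Prod>i\<in>I. exp (v i * (of_bool (Y i) - p i)))"
    by (simp add: exp_sum fin)
  also have "\<dots> = (\<Prod>i\<in>I. measure_pmf.expectation (bernoulli_pmf (p i)) (\<lambda>b. exp (v i * (of_bool b - p i))))"
    by (rule expectation_prod_Pi_pmf[OF fin]) (auto intro: integrable_measure_pmf_finite)
  also have "\<dots> \<le> (\<Prod>i\<in>I. exp ((v i)\<^sup>2 / 8))"
    by (intro prod_mono conjI bernoulli_centered_mgf_le integral_nonneg_AE AE_I2) (use p in auto)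
  also have "\<dots> = exp ((\<Sum>i\<in>I. (v i)\<^sup>2) / 8)"
    by (simp add: fin exp_sum[symmetric] sum_divide_distrib)
  finally show ?thesis .
qed

text \<open>The witness is the integer j nearest to c, for which -j^2/2 + j c \<ge> c^2/2 - 1/8.\<close>
lemma exp_square_le_lattice_sum:
  assumes "\<bar>c\<bar> \<le> real_of_int M"
  shows "exp (c\<^sup>2 / 2 - 1 / 8) \<le> (\<Sum>j\<in>{-M..M}. exp (- (real_of_int j)\<^sup>2 / 2 + of_int j * c))"
proof -
  define j0 where "j0 = round c"
  have r: "\<bar>of_int j0 - c\<bar> \<le> 1 / 2" unfolding j0_def by (rule of_int_round_abs_le)
  then have "\<bar>j0\<bar> < M + 1" using assms by linarith
  then have "j0 \<in> {-M..M}" by auto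
  moreover have "(of_int j0 - c)\<^sup>2 \<le> (1 / 2)\<^sup>2"
    using r by (metis abs_ge_zero power2_abs power_mono)
  then have "c\<^sup>2 / 2 - 1 / 8 \<le> - (real_of_int j0)\<^sup>2 / 2 + of_int j0 * c"
    by (simp add: power2_eq_square algebra_simps)
  ultimately show ?thesis
    by (intro order.trans[OF _ member_le_sum[of j0]]) auto
qed

lemma exp_sum_square_le_lattice_sum:
  assumes "\<And>k. k < r \<Longrightarrow> \<bar>c k\<bar> \<le> real_of_int M"
  shows "exp ((\<Sum>k<r. (c k)\<^sup>2) / 2) \<le> exp (real r / 8) *
    (\<Sum>\<xi>\<in>PiE {..<r} (\<lambda>_. {-M..M}). exp (- (\<Sum>k<r. (real_of_int (\<xi> k))\<^sup>2) / 2) * exp (\<Sum>k<r. \<xi> k * c k))"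
proof -
  have "exp ((\<Sum>k<r. (c k)\<^sup>2) / 2) = exp (real r / 8) * (\<Prod>k<r. exp ((c k)\<^sup>2 / 2 - 1 / 8))"
    by (simp add: exp_sum[symmetric] exp_add[symmetric] sum_subtractf sum_divide_distrib)
  also have "(\<Prod>k<r. exp ((c k)\<^sup>2 / 2 - 1 / 8))
      \<le> (\<Prod>k<r. \<Sum>j\<in>{-M..M}. exp (- (real_of_int j)\<^sup>2 / 2 + of_int j * c k))"
    by (intro prod_mono conjI exp_square_le_lattice_sum assms) auto
  also have "\<dots> = (\<Sum>\<xi>\<in>PiE {..<r} (\<lambda>_. {-M..M}). \<Prod>k<r. exp (- (real_of_int (\<xi> k))\<^sup>2 / 2 + \<xi> k * c k))"
    by (rule prod_sum_PiE) auto
  also have "\<dots> = (\<Sum>\<xi>\<in>PiE {..<r} (\<lambda>_. {-M..M}).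
      exp (- (\<Sum>k<r. (real_of_int (\<xi> k))\<^sup>2) / 2) * exp (\<Sum>k<r. \<xi> k * c k))"
  proof (rule sum.cong)
    fix \<xi> :: "nat \<Rightarrow> int"
    have "(\<Sum>k<r. - (real_of_int (\<xi> k))\<^sup>2 / 2 + \<xi> k * c k)
        = - (\<Sum>k<r. (real_of_int (\<xi> k))\<^sup>2) / 2 + (\<Sum>k<r. \<xi> k * c k)"
      by (simp add: sum_subtractf sum_divide_distrib)
    then show "(\<Prod>k<r. exp (- (real_of_int (\<xi> k))\<^sup>2 / 2 + \<xi> k * c k))
        = exp (- (\<Sum>k<r. (real_of_int (\<xi> k))\<^sup>2) / 2) * exp (\<Sum>k<r. \<xi> k * c k)"
      by (simp only: exp_sum[symmetric] exp_add[symmetric] finite_lessThan)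
  qed simp
  finally show ?thesis by simp
qed

lemma sum_symmetric_powers:
  fixes x :: real
  shows "(\<Sum>j\<in>{-int N..int N}. x ^ nat \<bar>j\<bar>) = 1 + 2 * (\<Sum>n\<in>{1..N}. x ^ n)"
proof (induction N)
  case (Suc N)
  have eq: "{-int (Suc N)..int (Suc N)} = insert (int (Suc N)) (insert (- int (Suc N)) {-int N..int N})"
    by auto
  have [simp]: "nat (1 + int N) = Suc N" "nat (int N + 1) = Suc N" by auto
  have "(\<Sum>j\<in>{-int (Suc N)..int (Suc N)}. x ^ nat \<bar>j\<bar>)
      = 2 * x ^ Suc N + (\<Sum>j\<in>{-int N..int N}. x ^ nat \<bar>j\<bar>)"
    unfolding eq by simp
  then show ?case using Suc by simp
qed simp

definition theta_bound :: real where
  "theta_bound = 1 + 2 / (1 - exp (- 3 / 8))"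

lemma theta_bound_gt_1: "1 < theta_bound"
  by (simp add: theta_bound_def)

lemma sum_exp_neg_square_le_theta_bound:
  "(\<Sum>j\<in>{-M..M}. exp (- 3 * (real_of_int j)\<^sup>2 / 8)) \<le> theta_bound"
proof (cases "M \<ge> 0")
  case False
  then show ?thesis using theta_bound_gt_1 by simp
next
  case True
  define x where "x = exp (- 3 / 8 :: real)"
  have x: "0 \<le> x" "x < 1" by (auto simp: x_def)
  have "exp (- 3 * (real_of_int j)\<^sup>2 / 8) \<le> x ^ nat \<bar>j\<bar>" for j :: int
  proof -
    have "\<bar>real_of_int j\<bar> \<le> (real_of_int j)\<^sup>2"
    proof (cases "j = 0")
      case False
      then have "\<bar>real_of_int j\<bar> * 1 \<le> \<bar>real_of_int j\<bar> * \<bar>real_of_int j\<bar>"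
        by (intro mult_left_mono) auto
      then show ?thesis by (simp add: power2_eq_square)
    qed simp
    moreover have "x ^ nat \<bar>j\<bar> = exp (real (nat \<bar>j\<bar>) * (- 3 / 8))"
      unfolding x_def by (rule exp_of_nat_mult[symmetric])
    ultimately show ?thesis by simp
  qed
  then have "(\<Sum>j\<in>{-M..M}. exp (- 3 * (real_of_int j)\<^sup>2 / 8)) \<le> (\<Sum>j\<in>{-M..M}. x ^ nat \<bar>j\<bar>)"
    by (intro sum_mono)
  also have "\<dots> = 1 + 2 * (\<Sum>n\<in>{1..nat M}. x ^ n)"
    using sum_symmetric_powers[of x "nat M"] True by simp
  also have "(\<Sum>n\<in>{1..nat M}. x ^ n) \<le> (\<Sum>n<Suc (nat M). x ^ n)"
    by (intro sum_mono2) (use x in auto)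
  also have "(\<Sum>n<Suc (nat M). x ^ n) = (1 - x ^ Suc (nat M)) / (1 - x)"
    using x geometric_sum[of x "Suc (nat M)"] by (metis minus_diff_eq minus_divide_divide less_irrefl)
  also have "\<dots> \<le> 1 / (1 - x)"
    using x by (intro divide_right_mono) auto
  finally show ?thesis by (simp add: theta_bound_def x_def)
qed

definition tail_const :: real where
  "tail_const = 1 / 8 + ln theta_bound"

lemma tail_const_pos: "0 < tail_const"
  using theta_bound_gt_1 by (simp add: tail_const_def add_pos_nonneg)

lemma exp_tail_const: "exp (tail_const * r) = exp (real r / 8) * theta_bound ^ r"
proof -
  have "exp (tail_const * r) = exp (real r / 8) * exp (real r * ln theta_bound)"
    by (simp add: tail_const_def exp_add[symmetric] algebra_simps)
  also have "exp (real r * ln theta_bound) = theta_bound ^ r"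
    using theta_bound_gt_1 by (simp add: exp_of_nat_mult)
  finally show ?thesis .
qed

lemma sum_lattice_gauss_le:
  fixes r :: nat and M :: int and S :: "(nat \<Rightarrow> int) \<Rightarrow> real"
  defines "S \<equiv> \<lambda>\<xi>. \<Sum>k<r. (real_of_int (\<xi> k))\<^sup>2"
  shows "(\<Sum>\<xi>\<in>PiE {..<r} (\<lambda>_. {-M..M}). exp (- S \<xi> / 2) * exp (S \<xi> / 8)) \<le> theta_bound ^ r"
proof -
  have "(\<Sum>\<xi>\<in>PiE {..<r} (\<lambda>_. {-M..M}). exp (- S \<xi> / 2) * exp (S \<xi> / 8))
      = (\<Sum>\<xi>\<in>PiE {..<r} (\<lambda>_. {-M..M}). \<Prod>k<r. exp (- 3 * (real_of_int (\<xi> k))\<^sup>2 / 8))"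
  proof (rule sum.cong)
    fix \<xi> :: "nat \<Rightarrow> int"
    have "exp (- S \<xi> / 2) * exp (S \<xi> / 8) = exp (\<Sum>k<r. - 3 * (real_of_int (\<xi> k))\<^sup>2 / 8)"
      by (simp add: S_def exp_add[symmetric] sum_distrib_left sum_divide_distrib[symmetric])
    then show "exp (- S \<xi> / 2) * exp (S \<xi> / 8) = (\<Prod>k<r. exp (- 3 * (real_of_int (\<xi> k))\<^sup>2 / 8))"
      by (simp add: exp_sum)
  qed simp
  also have "\<dots> = (\<Prod>k<r. \<Sum>j\<in>{-M..M}. exp (- 3 * (real_of_int j)\<^sup>2 / 8))"
    by (rule prod_sum_PiE[symmetric]) auto
  also have "\<dots> \<le> theta_bound ^ r"
    using prod_mono[of "{..<r}" "\<lambda>_. _" "\<lambda>_. theta_bound"] sum_exp_neg_square_le_theta_bound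
    by (simp add: sum_nonneg)
  finally show ?thesis .
qed

text \<open>The lattice bound turns exp (T/2), with T the squared norm of the projected noise, into a
  mixture of exponentials of linear forms in the noise, each controlled by Hoeffding's lemma.\<close>
lemma expectation_exp_projection_le:
  fixes U :: "nat \<Rightarrow> 'i \<Rightarrow> real"
  assumes fin: "finite I" and p: "\<And>i. i \<in> I \<Longrightarrow> 0 \<le> p i \<and> p i \<le> 1" and U: "orthonormal I r U"
  shows "measure_pmf.expectation (Pi_pmf I False (\<lambda>i. bernoulli_pmf (p i)))
     (\<lambda>Y. exp ((\<Sum>k<r. (inner_on I (U k) (\<lambda>i. of_bool (Y i) - p i))\<^sup>2) / 2)) \<le> exp (tail_const * r)"
proof -
  define P where "P = Pi_pmf I False (\<lambda>i. bernoulli_pmf (p i))"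
  define w where "w = (\<lambda>Y i. of_bool (Y i) - p i)"
  define M where "M = int (card I)"
  define Xi where "Xi = PiE {..<r} (\<lambda>_::nat. {-M..M})"
  define S where "S = (\<lambda>\<xi>::nat \<Rightarrow> int. \<Sum>k<r. (real_of_int (\<xi> k))\<^sup>2)"
  define v where "v = (\<lambda>(\<xi>::nat \<Rightarrow> int) i. \<Sum>k<r. real_of_int (\<xi> k) * U k i)"
  have intg: "integrable (measure_pmf P) f" for f :: "_ \<Rightarrow> real"
    unfolding P_def by (rule integrable_measure_pmf_finite[OF finite_set_pmf_Pi_pmf_bool[OF fin]])
  have bound: "\<bar>inner_on I (U k) (w Y)\<bar> \<le> real_of_int M" if "k < r" for Y k
    using abs_inner_on_orthonormal_le_card[OF U that fin] p by (simp add: M_def w_def)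
  have linear: "(\<Sum>k<r. \<xi> k * inner_on I (U k) (w Y)) = inner_on I (w Y) (v \<xi>)" for \<xi> Y
    by (subst inner_on_sum_right[of _ "v \<xi>"]) (simp_all add: v_def inner_on_commute)
  have "measure_pmf.expectation P (\<lambda>Y. exp ((\<Sum>k<r. (inner_on I (U k) (w Y))\<^sup>2) / 2))
      \<le> measure_pmf.expectation P (\<lambda>Y. exp (real r / 8) *
          (\<Sum>\<xi>\<in>Xi. exp (- S \<xi> / 2) * exp (inner_on I (w Y) (v \<xi>))))"
  proof (intro integral_mono intg)
    fix Y
    show "exp ((\<Sum>k<r. (inner_on I (U k) (w Y))\<^sup>2) / 2)
        \<le> exp (real r / 8) * (\<Sum>\<xi>\<in>Xi. exp (- S \<xi> / 2) * exp (inner_on I (w Y) (v \<xi>)))"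
      using exp_sum_square_le_lattice_sum[where r = r and c = "\<lambda>k. inner_on I (U k) (w Y)", OF bound]
      by (simp add: Xi_def S_def linear)
  qed
  also have "\<dots> = exp (real r / 8) *
      (\<Sum>\<xi>\<in>Xi. exp (- S \<xi> / 2) * measure_pmf.expectation P (\<lambda>Y. exp (inner_on I (w Y) (v \<xi>))))"
    by (simp add: intg)
  also have "\<dots> \<le> exp (real r / 8) * (\<Sum>\<xi>\<in>Xi. exp (- S \<xi> / 2) * exp (S \<xi> / 8))"
  proof -
    have "measure_pmf.expectation P (\<lambda>Y. exp (inner_on I (w Y) (v \<xi>))) \<le> exp (S \<xi> / 8)" for \<xi>
      using Pi_pmf_bernoulli_mgf_le[OF fin p, where v = "v \<xi>"]
        sum_square_orthonormal_expansion[OF U, where c = "\<lambda>k. real_of_int (\<xi> k)"]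
      by (simp add: P_def w_def S_def v_def inner_on_def mult.commute)
    then show ?thesis by (intro mult_left_mono sum_mono) auto
  qed
  also have "\<dots> \<le> exp (real r / 8) * theta_bound ^ r"
    using sum_lattice_gauss_le[of r M] by (simp add: Xi_def S_def)
  also have "\<dots> = exp (tail_const * r)"
    by (rule exp_tail_const[symmetric])
  finally show ?thesis by (simp add: P_def w_def)
qed

lemma projection_tail_bound:
  fixes U :: "nat \<Rightarrow> 'i \<Rightarrow> real"
  assumes fin: "finite I" and p: "\<And>i. i \<in> I \<Longrightarrow> 0 \<le> p i \<and> p i \<le> 1" and U: "orthonormal I r U"
    and "0 < \<alpha>"
  shows "1 - \<alpha> \<le> measure_pmf.prob (Pi_pmf I False (\<lambda>i. bernoulli_pmf (p i)))
     {Y. (\<Sum>k<r. (inner_on I (U k) (\<lambda>i. of_bool (Y i) - p i))\<^sup>2) \<le> 2 * (tail_const * r + ln (1 / \<alpha>))}"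
proof -
  define P where "P = Pi_pmf I False (\<lambda>i. bernoulli_pmf (p i))"
  define T where "T = (\<lambda>Y. \<Sum>k<r. (inner_on I (U k) (\<lambda>i. of_bool (Y i) - p i))\<^sup>2)"
  define K where "K = 2 * (tail_const * r + ln (1 / \<alpha>))"
  have "exp (K / 2) = exp (tail_const * r) / \<alpha>"
  proof -
    have "K / 2 = tail_const * r - ln \<alpha>" using \<open>0 < \<alpha>\<close> by (simp add: K_def ln_div)
    then have "exp (K / 2) = exp (tail_const * r) / exp (ln \<alpha>)" by (simp only: exp_diff)
    then show ?thesis using \<open>0 < \<alpha>\<close> by simp
  qed
  have "measure_pmf.prob P {Y. K < T Y} \<le> measure_pmf.prob P {Y \<in> space P. exp (K / 2) \<le> exp (T Y / 2)}"
    by (intro measure_pmf.finite_measure_mono) auto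
  also have "\<dots> \<le> measure_pmf.expectation P (\<lambda>Y. exp (T Y / 2)) / exp (K / 2)"
    unfolding P_def
    by (intro integral_Markov_inequality_measure[where A = UNIV] integrable_measure_pmf_finite
        finite_set_pmf_Pi_pmf_bool fin) auto
  also have "\<dots> \<le> exp (tail_const * r) / exp (K / 2)"
    using expectation_exp_projection_le[OF fin p U] by (intro divide_right_mono) (auto simp: P_def T_def)
  also have "\<dots> = \<alpha>"
    using \<open>exp (K / 2) = exp (tail_const * r) / \<alpha>\<close> \<open>0 < \<alpha>\<close> by simp
  finally have "measure_pmf.prob P {Y. K < T Y} \<le> \<alpha>" .
  moreover have "measure_pmf.prob P {Y. T Y \<le> K} = 1 - measure_pmf.prob P {Y. K < T Y}"
  proof -
    have "{Y. T Y \<le> K} = space (measure_pmf P) - {Y. K < T Y}" by auto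
    then show ?thesis using measure_pmf.prob_compl[of "{Y. K < T Y}" P] by simp
  qed
  ultimately show ?thesis by (simp add: P_def T_def K_def)
qed

section \<open>Randomized response\<close>

lemma pmf_flip:
  assumes "0 \<le> q" "q \<le> 1"
  shows "pmf (map_pmf (\<lambda>keep. if keep then b else \<not> b) (bernoulli_pmf q)) x = (if x = b then q else 1 - q)"
proof -
  define flip where "flip = (\<lambda>keep. if keep then b else \<not> b)"
  have "inj flip" unfolding flip_def by (cases b) (auto simp: inj_def)
  have "x = flip (x = b)" unfolding flip_def by (cases b) auto
  then have "pmf (map_pmf flip (bernoulli_pmf q)) x = pmf (bernoulli_pmf q) (x = b)"
    using pmf_map_inj'[OF \<open>inj flip\<close>, of _ "x = b"] by simp
  then show ?thesis using assms by (simp add: flip_def)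
qed

lemma flip_prob_ratio_le:
  assumes "0 \<le> t"
  shows "(if a = b then sigmoid t else 1 - sigmoid t) \<le> exp t * (if a = b' then sigmoid t else 1 - sigmoid t)"
proof -
  have "0 < exp t + 1" by (simp add: add_pos_pos)
  then have one_minus: "1 - sigmoid t = 1 / (exp t + 1)"
    by (simp add: sigmoid_conv_exp field_simps)
  have "sigmoid t \<le> exp t * (1 - sigmoid t)"
    unfolding one_minus by (simp add: sigmoid_conv_exp)
  moreover have "1 - sigmoid t \<le> exp t * sigmoid t"
  proof -
    have "1 - sigmoid t \<le> sigmoid t"
      using assms unfolding one_minus by (simp add: sigmoid_conv_exp divide_right_mono add_pos_pos)
    also have "\<dots> \<le> exp t * sigmoid t" using sigmoid_pos[of t] assms by simp
    finally show ?thesis .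
  qed
  moreover have "sigmoid t \<le> exp t * sigmoid t" "1 - sigmoid t \<le> exp t * (1 - sigmoid t)"
    using assms sigmoid_pos[of t] sigmoid_less_1[of t] by simp_all
  ultimately show ?thesis by (simp split: if_split)
qed

lemma pmf_rr_pmf:
  "pmf (rr_pmf \<epsilon> n m y) \<omega> = (if \<forall>p. p \<notin> sample_idx n m \<longrightarrow> \<not> \<omega> p
     then \<Prod>p\<in>sample_idx n m. (if \<omega> p = y p then sigmoid (\<epsilon> / m) else 1 - sigmoid (\<epsilon> / m)) else 0)"
  using sigmoid_pos[of "\<epsilon> / m"] sigmoid_less_1[of "\<epsilon> / m"]
  by (simp add: rr_pmf_def pmf_Pi sample_idx_def pmf_flip less_imp_le cong: if_cong)

text \<open>Only the m samples of user k differ, each costing a factor at most exp (\<epsilon> / m).\<close>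
lemma pmf_rr_pmf_le:
  assumes "k < n" "1 \<le> m" "0 \<le> \<epsilon>"
    and agree: "\<forall>i<n. \<forall>j<m. i \<noteq> k \<longrightarrow> y (i, j) = y' (i, j)"
  shows "pmf (rr_pmf \<epsilon> n m y) \<omega> \<le> exp \<epsilon> * pmf (rr_pmf \<epsilon> n m y') \<omega>"
proof -
  define f where "f = (\<lambda>z p. if \<omega> p = z p then sigmoid (\<epsilon> / m) else 1 - sigmoid (\<epsilon> / m))"
  define Ik where "Ik = {k} \<times> {..<m}"
  have "f y p \<le> (if p \<in> Ik then exp (\<epsilon> / m) else 1) * f y' p" if "p \<in> sample_idx n m" for p
  proof (cases "p \<in> Ik")
    case True
    then show ?thesis unfolding f_def using \<open>0 \<le> \<epsilon>\<close> by (simp add: flip_prob_ratio_le)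
  next
    case False
    then have "y p = y' p" using that agree by (auto simp: Ik_def sample_idx_def)
    then show ?thesis using False by (simp add: f_def)
  qed
  then have "(\<Prod>p\<in>sample_idx n m. f y p)
      \<le> (\<Prod>p\<in>sample_idx n m. (if p \<in> Ik then exp (\<epsilon> / m) else 1) * f y' p)"
    using sigmoid_pos[of "\<epsilon> / m"] sigmoid_less_1[of "\<epsilon> / m"]
    by (intro prod_mono) (auto simp: f_def)
  also have "\<dots> = exp (\<epsilon> / m) ^ card Ik * (\<Prod>p\<in>sample_idx n m. f y' p)"
    using \<open>k < n\<close>
    by (simp add: prod.distrib prod.If_cases sample_idx_def Ik_def Int_absorb1 subset_iff)
  also have "exp (\<epsilon> / m) ^ card Ik = exp \<epsilon>"
    using \<open>1 \<le> m\<close> by (simp add: Ik_def exp_of_nat_mult[symmetric])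
  finally show ?thesis by (auto simp: pmf_rr_pmf f_def)
qed

lemma measure_pmf_le_if_pmf_le:
  assumes "\<And>x. pmf M x \<le> c * pmf N x"
  shows "measure_pmf.prob M A \<le> c * measure_pmf.prob N A"
proof -
  have "measure_pmf.prob M A = infsetsum (pmf M) A" by (rule measure_pmf_conv_infsetsum)
  also have "\<dots> \<le> infsetsum (\<lambda>x. c * pmf N x) A"
    using assms by (intro infsetsum_mono abs_summable_on_cmult_right) auto
  also have "\<dots> = c * measure_pmf.prob N A"
    by (subst infsetsum_cmult_right) (auto simp: measure_pmf_conv_infsetsum)
  finally show ?thesis .
qed

lemma rr_user_label_dp:
  assumes "1 \<le> m" "0 \<le> \<epsilon>"
  shows "user_label_dp \<epsilon> n m (\<lambda>y. map_pmf \<theta>hat (rr_pmf \<epsilon> n m y))"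
  unfolding user_label_dp_def measure_map_pmf
proof (intro allI impI)
  fix k and y y' :: "nat \<times> nat \<Rightarrow> bool" and E
  assume "k < n" "\<forall>i<n. \<forall>j<m. i \<noteq> k \<longrightarrow> y (i, j) = y' (i, j)"
  with assms show "measure_pmf.prob (rr_pmf \<epsilon> n m y) (\<theta>hat -` E)
      \<le> exp \<epsilon> * measure_pmf.prob (rr_pmf \<epsilon> n m y') (\<theta>hat -` E)"
    by (intro measure_pmf_le_if_pmf_le pmf_rr_pmf_le)
qed

lemma bind_bernoulli_flip:
  assumes "0 \<le> q" "q \<le> 1" "0 \<le> s" "s \<le> 1"
  shows "bind_pmf (bernoulli_pmf s) (\<lambda>b. map_pmf (\<lambda>keep. if keep then b else \<not> b) (bernoulli_pmf q))
       = bernoulli_pmf (q * s + (1 - q) * (1 - s))"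
proof (rule pmf_eqI)
  have "0 \<le> q * s + (1 - q) * (1 - s) \<and> q * s + (1 - q) * (1 - s) \<le> 1"
    using assms by (auto intro!: convex_bound_le add_nonneg_nonneg mult_nonneg_nonneg)
  then show "pmf (bind_pmf (bernoulli_pmf s) (\<lambda>b. map_pmf (\<lambda>keep. if keep then b else \<not> b) (bernoulli_pmf q))) x
      = pmf (bernoulli_pmf (q * s + (1 - q) * (1 - s))) x" for x
    using assms by (cases x) (simp_all add: pmf_bind pmf_flip algebra_simps)
qed

lemma btl_labels_bind_rr_pmf:
  "bind_pmf (btl_labels d n m x \<theta>) (rr_pmf \<epsilon> n m)
    = Pi_pmf (sample_idx n m) False
        (\<lambda>p. bernoulli_pmf (rr_mean (sigmoid (\<epsilon> / m)) (vinner d (x (fst p) (snd p)) \<theta>)))"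
proof -
  define s where "s = (\<lambda>p. sigmoid (vinner d (x (fst p) (snd p)) \<theta>))"
  define q where "q = sigmoid (\<epsilon> / m)"
  have s01: "0 \<le> s p" "s p \<le> 1" and q01: "0 \<le> q" "q \<le> 1" for p
    using sigmoid_pos sigmoid_less_1 by (simp_all add: s_def q_def less_imp_le)
  have "btl_labels d n m x \<theta> = Pi_pmf (sample_idx n m) False (\<lambda>p. bernoulli_pmf (s p))"
    unfolding btl_labels_def s_def by (simp add: case_prod_beta')
  then have "bind_pmf (btl_labels d n m x \<theta>) (rr_pmf \<epsilon> n m)
      = bind_pmf (Pi_pmf (sample_idx n m) False (\<lambda>p. bernoulli_pmf (s p))) (\<lambda>y.
          Pi_pmf (sample_idx n m) False (\<lambda>p. map_pmf (\<lambda>keep. if keep then y p else \<not> y p) (bernoulli_pmf q)))"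
    by (simp add: rr_pmf_def[abs_def] q_def)
  also have "\<dots> = Pi_pmf (sample_idx n m) False (\<lambda>p. bind_pmf (bernoulli_pmf (s p))
          (\<lambda>b. map_pmf (\<lambda>keep. if keep then b else \<not> b) (bernoulli_pmf q)))"
    by (rule Pi_pmf_bind[symmetric]) (simp add: sample_idx_def)
  also have "\<dots> = Pi_pmf (sample_idx n m) False (\<lambda>p. bernoulli_pmf (q * s p + (1 - q) * (1 - s p)))"
    by (simp add: bind_bernoulli_flip s01 q01)
  finally show ?thesis by (simp add: rr_mean_def s_def q_def)
qed

section \<open>The estimation error\<close>

lemma quad_form_gram:
  assumes "1 \<le> n" "1 \<le> m"
  shows "real n * real m * quad_form d (gram n m x) D
    = (\<Sum>p\<in>sample_idx n m. (vinner d (x (fst p) (snd p)) D)\<^sup>2)"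
proof -
  define X where "X = (\<lambda>p. x (fst p) (snd p))"
  have gram: "real n * real m * gram n m x k l = (\<Sum>p\<in>sample_idx n m. X p k * X p l)" for k l
    using assms by (simp add: gram_def X_def sample_idx_def sum.cartesian_product case_prod_beta)
  have "real n * real m * quad_form d (gram n m x) D
      = (\<Sum>k<d. \<Sum>l<d. (real n * real m * gram n m x k l) * D k * D l)"
    by (simp add: quad_form_def sum_distrib_left mult.assoc)
  also have "\<dots> = (\<Sum>k<d. \<Sum>l<d. \<Sum>p\<in>sample_idx n m. X p k * D k * (X p l * D l))"
    unfolding gram by (simp add: sum_distrib_left mult_ac)
  also have "\<dots> = (\<Sum>k<d. \<Sum>p\<in>sample_idx n m. \<Sum>l<d. X p k * D k * (X p l * D l))"
    by (intro sum.cong refl sum.swap)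
  also have "\<dots> = (\<Sum>p\<in>sample_idx n m. \<Sum>k<d. \<Sum>l<d. X p k * D k * (X p l * D l))"
    by (rule sum.swap)
  also have "\<dots> = (\<Sum>p\<in>sample_idx n m. (vinner d (X p) D)\<^sup>2)"
    by (simp add: vinner_def power2_eq_square sum_product)
  finally show ?thesis by (simp add: X_def)
qed

lemma lambda_min_gram_le:
  assumes "1 \<le> n" "1 \<le> m" "D \<in> vecs d"
  shows "real n * real m * lambda_min d (gram n m x) * vinner d D D
    \<le> (\<Sum>p\<in>sample_idx n m. (vinner d (x (fst p) (snd p)) D)\<^sup>2)"
proof -
  have "lambda_min d (gram n m x) * vinner d D D \<le> quad_form d (gram n m x) D"
    by (rule lambda_min_le_quad_form[OF _ assms(3)]) (simp add: gram_def mult.commute)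
  then show ?thesis
    using assms(1,2) by (simp add: quad_form_gram[symmetric] mult.assoc)
qed

lemma rr_nll_basic_inequality:
  assumes "finite I" "1 / 2 \<le> q" "\<And>p. p \<in> I \<Longrightarrow> \<bar>z0 p\<bar> \<le> R \<and> \<bar>z1 p\<bar> \<le> R"
    and "(\<Sum>p\<in>I. rr_nll q (y p) (z1 p)) \<le> (\<Sum>p\<in>I. rr_nll q (y p) (z0 p))"
  shows "(2 * q - 1) / (2 + 2 * cosh R) / 2 * inner_on I (\<lambda>p. z1 p - z0 p) (\<lambda>p. z1 p - z0 p)
    \<le> inner_on I (\<lambda>p. of_bool (y p) - rr_mean q (z0 p)) (\<lambda>p. z1 p - z0 p)"
proof -
  have "(\<Sum>p\<in>I. (rr_mean q (z0 p) - of_bool (y p)) * (z1 p - z0 p)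
        + (2 * q - 1) * (1 / (2 + 2 * cosh R) / 2) * (z1 p - z0 p)\<^sup>2)
      \<le> (\<Sum>p\<in>I. rr_nll q (y p) (z1 p) - rr_nll q (y p) (z0 p))"
    using assms(2,3) by (intro sum_mono rr_nll_strongly_convex) auto
  also have "\<dots> \<le> 0" using assms(4) by (simp add: sum_subtractf)
  also have "(\<Sum>p\<in>I. (rr_mean q (z0 p) - of_bool (y p)) * (z1 p - z0 p)
        + (2 * q - 1) * (1 / (2 + 2 * cosh R) / 2) * (z1 p - z0 p)\<^sup>2)
      = (\<Sum>p\<in>I. (2 * q - 1) / (2 + 2 * cosh R) / 2 * ((z1 p - z0 p) * (z1 p - z0 p))
        - (of_bool (y p) - rr_mean q (z0 p)) * (z1 p - z0 p))"
    by (intro sum.cong refl) (simp add: power2_eq_square algebra_simps)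
  finally show ?thesis
    by (simp add: inner_on_def sum_subtractf sum_distrib_left)
qed

lemma sqrt_inner_on_le_of_basic_inequality:
  assumes "0 < \<kappa>" "\<kappa> / 2 * inner_on I z z \<le> inner_on I w z"
    and "orthonormal I r U" "in_orthonormal_span I r U z"
  shows "sqrt (inner_on I z z) \<le> 2 * sqrt (\<Sum>k<r. (inner_on I (U k) w)\<^sup>2) / \<kappa>"
proof -
  define s where "s = sqrt (inner_on I z z)"
  define T where "T = sqrt (\<Sum>k<r. (inner_on I (U k) w)\<^sup>2)"
  have "inner_on I z z = s * s"
    using real_sqrt_pow2[OF inner_on_self_nonneg[of I z]] by (simp add: s_def power2_eq_square)
  then have "(\<kappa> / 2 * s) * s \<le> T * s"
    using assms(2) inner_on_le_projection_norm[OF assms(3,4), of w] by (simp add: s_def T_def mult_ac)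
  moreover have "0 \<le> s" "0 \<le> T" by (simp_all add: s_def T_def sum_nonneg inner_on_self_nonneg)
  ultimately have "\<kappa> / 2 * s \<le> T"
    by (cases "s = 0") (auto dest: mult_right_le_imp_le)
  then show ?thesis using assms(1) by (simp add: s_def T_def field_simps)
qed

lemma rr_error_le_projected_noise:
  fixes x :: "nat \<Rightarrow> nat \<Rightarrow> nat \<Rightarrow> real" and yt :: "nat \<times> nat \<Rightarrow> bool"
    and n m :: nat and \<epsilon> :: real
  defines "I \<equiv> sample_idx n m" and "q \<equiv> sigmoid (\<epsilon> / real m)" and "X \<equiv> \<lambda>p. x (fst p) (snd p)"
  assumes "1 \<le> n" "1 \<le> m" "0 < \<epsilon>"
    and R: "\<And>\<theta> p. \<theta> \<in> Theta_B d B \<Longrightarrow> \<bar>vinner d (X p) \<theta>\<bar> \<le> R"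
    and \<theta>s: "\<theta>s \<in> Theta_B d B" and \<theta>h: "\<theta>h \<in> Theta_B d B"
    and opt: "rr_loss d n m \<epsilon> x yt \<theta>h \<le> rr_loss d n m \<epsilon> x yt \<theta>s"
    and lam: "0 < lambda_min d (gram n m x)"
    and U: "orthonormal I r U" and span: "\<And>k. k < d \<Longrightarrow> in_orthonormal_span I r U (\<lambda>p. X p k)"
  shows "vnorm d (\<lambda>k. \<theta>h k - \<theta>s k)
    \<le> 2 * sqrt (\<Sum>k<r. (inner_on I (U k) (\<lambda>p. of_bool (yt p) - rr_mean q (vinner d (X p) \<theta>s)))\<^sup>2)
      / ((2 * q - 1) / (2 + 2 * cosh R) * sqrt (real n * real m * lambda_min d (gram n m x)))"
proof -
  define D where "D = (\<lambda>k. \<theta>h k - \<theta>s k)"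
  define \<delta> where "\<delta> = (\<lambda>p. vinner d (X p) \<theta>h - vinner d (X p) \<theta>s)"
  define \<kappa> where "\<kappa> = (2 * q - 1) / (2 + 2 * cosh R)"
  define T where "T = (\<Sum>k<r. (inner_on I (U k) (\<lambda>p. of_bool (yt p) - rr_mean q (vinner d (X p) \<theta>s)))\<^sup>2)"
  define N where "N = real n * real m * lambda_min d (gram n m x)"
  have "1 / 2 < q" using sigmoid_gt_half \<open>0 < \<epsilon>\<close> \<open>1 \<le> m\<close> by (simp add: q_def)
  then have "0 < \<kappa>" by (simp add: \<kappa>_def add_pos_nonneg)
  have "\<kappa> / 2 * inner_on I \<delta> \<delta>
      \<le> inner_on I (\<lambda>p. of_bool (yt p) - rr_mean q (vinner d (X p) \<theta>s)) \<delta>"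
    unfolding \<kappa>_def \<delta>_def
    using \<open>1 / 2 < q\<close> R[OF \<theta>s] R[OF \<theta>h] opt
    by (intro rr_nll_basic_inequality) (auto simp: I_def sample_idx_def q_def X_def rr_loss_eq_sum_rr_nll)
  moreover have "in_orthonormal_span I r U \<delta>"
    by (rule in_orthonormal_span_lincomb[where J = "{..<d}" and c = D, OF span])
      (auto simp: \<delta>_def D_def vinner_def sum_subtractf algebra_simps)
  ultimately have "sqrt (inner_on I \<delta> \<delta>) \<le> 2 * sqrt T / \<kappa>"
    unfolding T_def by (rule sqrt_inner_on_le_of_basic_inequality[OF \<open>0 < \<kappa>\<close> _ U])
  moreover have "N * vinner d D D \<le> inner_on I \<delta> \<delta>"
  proof -
    have "D \<in> vecs d" using \<theta>s \<theta>h by (simp add: D_def Theta_B_def vecs_def)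
    from lambda_min_gram_le[OF \<open>1 \<le> n\<close> \<open>1 \<le> m\<close> this, of x]
    show ?thesis
      by (simp add: N_def I_def X_def \<delta>_def D_def inner_on_def power2_eq_square vinner_def
          sum_subtractf algebra_simps)
  qed
  moreover have "0 < N" using lam \<open>1 \<le> n\<close> \<open>1 \<le> m\<close> by (simp add: N_def)
  ultimately have "sqrt N * vnorm d D \<le> 2 * sqrt T / \<kappa>"
    by (metis real_sqrt_le_mono real_sqrt_mult vnorm_eq_sqrt_vinner order.trans)
  then have "vnorm d D \<le> 2 * sqrt T / \<kappa> / sqrt N"
    using \<open>0 < N\<close> by (subst pos_le_divide_eq) (simp_all add: mult.commute)
  then show ?thesis
    unfolding divide_divide_eq_left D_def T_def N_def \<kappa>_def .
qed

lemma abs_vinner_feat_le: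
  assumes "\<And>st act. vnorm d (\<phi> st act) \<le> L" "\<theta> \<in> Theta_B d B"
  shows "\<bar>vinner d (feat \<phi> s a0 a1 i j) \<theta>\<bar> \<le> 2 * L * B"
proof -
  have "vnorm d (feat \<phi> s a0 a1 i j) \<le> L + L"
    unfolding feat_def by (rule order.trans[OF vnorm_diff_le add_mono]) (use assms(1) in auto)
  moreover have "0 \<le> L" using assms(1) vnorm_nonneg order.trans by blast
  ultimately have "vnorm d (feat \<phi> s a0 a1 i j) * vnorm d \<theta> \<le> (2 * L) * B"
    using assms(2) by (intro mult_mono) (auto simp: Theta_B_def vnorm_nonneg)
  then show ?thesis using abs_vinner_le order.trans by (simp add: mult.assoc) blast
qed

lemma gamma_LB_eq: "gamma_LB L B = 1 / (2 + 2 * cosh (2 * L * B))"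
  by (simp add: gamma_LB_def cosh_field_def)

lemma error_bound_rearrange:
  fixes K s g lam N e c :: real
  assumes "K \<le> c * s" "0 < c" "0 \<le> s" "0 < g" "0 < lam" "0 < N" "1 < e"
  shows "2 * sqrt K / ((e - 1) / (e + 1) * g * sqrt (N * lam))
    \<le> 2 * sqrt c * (1 / (g * sqrt lam)) * ((e + 1) / (e - 1)) * sqrt (s / N)"
proof -
  define A where "A = 2 * (e + 1) / ((e - 1) * g * sqrt N * sqrt lam)"
  have "sqrt K \<le> sqrt c * sqrt s" using assms(1) by (simp add: real_sqrt_mult[symmetric])
  then have "A * sqrt K \<le> A * (sqrt c * sqrt s)"
    using assms by (intro mult_left_mono) (auto simp: A_def)
  moreover have "2 * sqrt K / ((e - 1) / (e + 1) * g * sqrt (N * lam)) = A * sqrt K"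
    using assms by (simp add: A_def real_sqrt_mult field_simps)
  moreover have "2 * sqrt c * (1 / (g * sqrt lam)) * ((e + 1) / (e - 1)) * sqrt (s / N)
      = A * (sqrt c * sqrt s)"
    using assms by (simp add: A_def real_sqrt_divide field_simps)
  ultimately show ?thesis by simp
qed

lemma rr_error_radius_le:
  fixes r d n m :: nat
  assumes T: "T \<le> 2 * (tail_const * r + ln (1 / \<alpha>))" and "r \<le> d" "0 < \<alpha>" "\<alpha> < 1"
    and "0 < \<epsilon>" "1 \<le> n" "1 \<le> m" "0 < lam"
  shows "2 * sqrt T / ((2 * sigmoid (\<epsilon> / real m) - 1) / (2 + 2 * cosh (2 * L * B))
      * sqrt (real n * real m * lam))
    \<le> 2 * sqrt (2 * (tail_const + 1)) * (1 / (gamma_LB L B * sqrt lam))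
      * ((exp (\<epsilon> / real m) + 1) / (exp (\<epsilon> / real m) - 1))
      * sqrt ((real d + ln (1 / \<alpha>)) / (real n * real m))"
proof -
  have "tail_const * r \<le> (tail_const + 1) * d"
    using \<open>r \<le> d\<close> tail_const_pos by (intro mult_mono) auto
  moreover have "0 \<le> tail_const * ln (1 / \<alpha>)" "0 \<le> ln (1 / \<alpha>)"
    using assms(3,4) tail_const_pos by simp_all
  ultimately have T': "T \<le> 2 * (tail_const + 1) * (real d + ln (1 / \<alpha>))"
    using T by (simp add: algebra_simps)
  have \<kappa>: "(2 * sigmoid (\<epsilon> / real m) - 1) / (2 + 2 * cosh (2 * L * B))
      = (exp (\<epsilon> / real m) - 1) / (exp (\<epsilon> / real m) + 1) * gamma_LB L B"
    by (simp add: two_sigmoid_minus_1 gamma_LB_eq)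
  show ?thesis
    unfolding \<kappa> using tail_const_pos assms \<open>0 \<le> ln (1 / \<alpha>)\<close>
    by (intro error_bound_rearrange[OF T']) (simp_all add: gamma_LB_def add_pos_pos)
qed

lemma rr_estimation_error_whp:
  fixes \<phi> :: "'s \<Rightarrow> 'a \<Rightarrow> nat \<Rightarrow> real" and \<theta>hat :: "(nat \<times> nat \<Rightarrow> bool) \<Rightarrow> nat \<Rightarrow> real"
    and s :: "nat \<Rightarrow> nat \<Rightarrow> 's" and a0 a1 :: "nat \<Rightarrow> nat \<Rightarrow> 'a"
  defines "x \<equiv> feat \<phi> s a0 a1"
  assumes nm: "1 \<le> n" "1 \<le> m" and "0 < \<epsilon>" and \<alpha>: "0 < \<alpha>" "\<alpha> < 1"
    and \<phi>: "\<And>st act. vnorm d (\<phi> st act) \<le> L"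
    and \<theta>star: "\<theta>star \<in> Theta_B d B" and \<theta>hat: "\<And>yt. \<theta>hat yt \<in> Theta_B d B"
    and opt: "\<And>yt. rr_loss d n m \<epsilon> x yt (\<theta>hat yt) \<le> rr_loss d n m \<epsilon> x yt \<theta>star"
    and lam: "0 < lambda_min d (gram n m x)"
  shows "1 - \<alpha> \<le> measure_pmf.prob (bind_pmf (btl_labels d n m x \<theta>star) (rr_pmf \<epsilon> n m))
    {yt. vnorm d (\<lambda>k. \<theta>hat yt k - \<theta>star k)
      \<le> 2 * sqrt (2 * (tail_const + 1)) * (1 / (gamma_LB L B * sqrt (lambda_min d (gram n m x))))
        * ((exp (\<epsilon> / real m) + 1) / (exp (\<epsilon> / real m) - 1))
        * sqrt ((real d + ln (1 / \<alpha>)) / (real n * real m))}"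
    (is "_ \<le> measure_pmf.prob _ ?good")
proof -
  define I where "I = sample_idx n m"
  define q where "q = sigmoid (\<epsilon> / real m)"
  define X where "X = (\<lambda>p. x (fst p) (snd p))"
  define \<mu> where "\<mu> = (\<lambda>p. rr_mean q (vinner d (X p) \<theta>star))"
  have "finite I" by (simp add: I_def sample_idx_def)
  obtain U r where "r \<le> d" and U: "orthonormal I r U"
    and span: "\<And>k. k < d \<Longrightarrow> in_orthonormal_span I r U (\<lambda>p. X p k)"
    using gram_schmidt_on[OF \<open>finite I\<close>, of d "\<lambda>k p. X p k"] by blast
  have bound: "\<bar>vinner d (X p) \<theta>\<bar> \<le> 2 * L * B" if "\<theta> \<in> Theta_B d B" for \<theta> p
    using abs_vinner_feat_le[OF \<phi> that] by (simp add: X_def x_def)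
  define T where "T = (\<lambda>Y. \<Sum>k<r. (inner_on I (U k) (\<lambda>p. of_bool (Y p) - \<mu> p))\<^sup>2)"
  have \<mu>: "0 \<le> \<mu> p \<and> \<mu> p \<le> 1" for p
    using sigmoid_pos[of "\<epsilon> / m"] sigmoid_less_1[of "\<epsilon> / m"] by (simp add: \<mu>_def q_def rr_mean_bounds)
  have "{Y. T Y \<le> 2 * (tail_const * r + ln (1 / \<alpha>))} \<subseteq> ?good"
  proof
    fix Y assume "Y \<in> {Y. T Y \<le> 2 * (tail_const * r + ln (1 / \<alpha>))}"
    then have T: "T Y \<le> 2 * (tail_const * r + ln (1 / \<alpha>))" by simp
    have "vnorm d (\<lambda>k. \<theta>hat Y k - \<theta>star k)
        \<le> 2 * sqrt (T Y) / ((2 * q - 1) / (2 + 2 * cosh (2 * L * B))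
          * sqrt (real n * real m * lambda_min d (gram n m x)))"
      unfolding T_def \<mu>_def q_def I_def X_def
      using \<theta>star \<theta>hat opt lam U span nm \<open>0 < \<epsilon>\<close> bound
      by (intro rr_error_le_projected_noise) (auto simp: I_def X_def)
    also have "\<dots> \<le> 2 * sqrt (2 * (tail_const + 1)) * (1 / (gamma_LB L B * sqrt (lambda_min d (gram n m x))))
        * ((exp (\<epsilon> / real m) + 1) / (exp (\<epsilon> / real m) - 1))
        * sqrt ((real d + ln (1 / \<alpha>)) / (real n * real m))"
      using T \<open>r \<le> d\<close> \<alpha> \<open>0 < \<epsilon>\<close> nm lam unfolding q_def by (rule rr_error_radius_le)
    finally show "Y \<in> ?good" by simp
  qed
  then have "measure_pmf.prob (Pi_pmf I False (\<lambda>p. bernoulli_pmf (\<mu> p)))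
      {Y. T Y \<le> 2 * (tail_const * r + ln (1 / \<alpha>))}
    \<le> measure_pmf.prob (Pi_pmf I False (\<lambda>p. bernoulli_pmf (\<mu> p))) ?good"
    by (rule measure_pmf.finite_measure_mono) simp
  with projection_tail_bound[where p = \<mu>, OF \<open>finite I\<close> \<mu> U \<open>0 < \<alpha>\<close>]
  have "1 - \<alpha> \<le> measure_pmf.prob (Pi_pmf I False (\<lambda>p. bernoulli_pmf (\<mu> p))) ?good"
    unfolding T_def by linarith
  also have "Pi_pmf I False (\<lambda>p. bernoulli_pmf (\<mu> p)) = bind_pmf (btl_labels d n m x \<theta>star) (rr_pmf \<epsilon> n m)"
    by (simp add: btl_labels_bind_rr_pmf I_def \<mu>_def q_def X_def)
  finally show ?thesis .
qed

theorem theorem1: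
  shows "\<exists>C>0. \<forall>(d::nat) (n::nat) (m::nat) (\<epsilon>::real) (\<alpha>::real) (L::real) (B::real)
      (\<phi>::'s \<Rightarrow> 'a \<Rightarrow> (nat \<Rightarrow> real)) (s::nat \<Rightarrow> nat \<Rightarrow> 's) (a0::nat \<Rightarrow> nat \<Rightarrow> 'a)
      (a1::nat \<Rightarrow> nat \<Rightarrow> 'a) (\<theta>star::nat \<Rightarrow> real)
      (\<theta>hat::((nat \<times> nat) \<Rightarrow> bool) \<Rightarrow> (nat \<Rightarrow> real)).
    d \<ge> 1 \<and> n \<ge> 1 \<and> m \<ge> 1 \<and> \<epsilon> > 0 \<and> 0 < \<alpha> \<and> \<alpha> < 1 \<and>
    (\<forall>st act. \<phi> st act \<in> vecs d \<and> vnorm d (\<phi> st act) \<le> L) \<and>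
    \<theta>star \<in> Theta_B d B \<and>
    (\<forall>yt. \<theta>hat yt \<in> Theta_B d B \<and>
       (\<forall>\<theta>\<in>Theta_B d B. rr_loss d n m \<epsilon> (feat \<phi> s a0 a1) yt (\<theta>hat yt)
                          \<le> rr_loss d n m \<epsilon> (feat \<phi> s a0 a1) yt \<theta>)) \<and>
    lambda_min d (gram n m (feat \<phi> s a0 a1)) > 0
    \<longrightarrow>
    user_label_dp \<epsilon> n m (\<lambda>y. map_pmf \<theta>hat (rr_pmf \<epsilon> n m y)) \<and>
    measure_pmf.prob
      (bind_pmf (btl_labels d n m (feat \<phi> s a0 a1) \<theta>star) (\<lambda>y. rr_pmf \<epsilon> n m y))
      {yt. vnorm d (\<lambda>k. \<theta>hat yt k - \<theta>star k)
             \<le> C * (1 / (gamma_LB L B * sqrt (lambda_min d (gram n m (feat \<phi> s a0 a1)))))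
                 * ((exp (\<epsilon> / real m) + 1) / (exp (\<epsilon> / real m) - 1))
                 * sqrt ((real d + ln (1 / \<alpha>)) / (real n * real m))}
      \<ge> 1 - \<alpha>"
proof (intro exI[of _ "2 * sqrt (2 * (tail_const + 1))"] conjI allI impI)
  show "0 < 2 * sqrt (2 * (tail_const + 1))" using tail_const_pos by simp
qed (elim conjE; (rule rr_user_label_dp rr_estimation_error_whp); auto simp: less_imp_le)+

end
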